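(* Let $C\subset\mathbb{R}^d$ be a smooth centrally symmetric convex body. Then every sticky infinitesimally rigid $C$-packing is sticky rigid.
   Context: A centrally symmetric convex body $C$ (compact, convex, non-empty interior, $C=-C$) defines the norm $\|x\|_C=\inf\{\lambda>0:x\in\lambda C\}$; $C$ is smooth if each boundary point has a unique supporting hyperplane; $\varphi_C(x)$ denotes the derivative of $\tfrac12\|\cdot\|_C^2$ at $x\ne0$. A $C$-packing $P=(G,p,r)$ is a finite family $\{r_vC+p_v:v\in V\}$ ($r_v>0$) with pairwise disjoint interiors, with contact graph $G=(V,E)$ ($vw\in E$ iff the copies intersect). The rigidity matrix $R_C(G,p)$ is the $|E|\times d|V|$ matrix whose row $vw$ has $\varphi_C(p_v-p_w)$ in the $v$ columns, $\varphi_C(p_w-p_v)$ in the $w$ columns and zeros elsewhere. A flex is $u\in\ker R_C(G,p)$; it is trivial if there is an affine map $g$ in the tangent space at the identity of the isometry group of $(\mathbb{R}^d,\|\cdot\|_C)$ with $g(p_v)=u_v$ for all $v$. $P$ is sticky infinitesimally rigid if it is well-positioned ($p_v\neq p_w$ for $vw\in E$ and $\|\cdot\|_C$ differentiable at each $p_v-p_w$) and all flexes are trivial. $P$ is sticky rigid if every continuous path $\alpha:[0,\delta]\to\mathbb{R}^{d|V|}$ with $\alpha(0)=p$ and $\|\alpha_v(t)-\alpha_w(t)\|_C=\|p_v-p_w\|_C$ for all $vw\in E$, $t$, is such that each $\alpha(t)$ is the image of $p$ under an isometry of $(\mathbb{R}^d,\|\cdot\|_C)$. *)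

theory Defs
  imports "HOL-Analysis.Analysis"
begin

definition cs_convex_body :: "'a::euclidean_space set \<Rightarrow> bool" where
  "cs_convex_body C \<longleftrightarrow> compact C \<and> convex C \<and> interior C \<noteq> {} \<and> uminus ` C = C"

definition supporting_hyperplane :: "'a::euclidean_space set \<Rightarrow> 'a \<Rightarrow> 'a set \<Rightarrow> bool" where
  "supporting_hyperplane C x H \<longleftrightarrow>
     (\<exists>u. u \<noteq> 0 \<and> (\<forall>y\<in>C. u \<bullet> y \<le> u \<bullet> x) \<and> H = {y. u \<bullet> y = u \<bullet> x})"

definition smooth_body :: "'a::euclidean_space set \<Rightarrow> bool" where
  "smooth_body C \<longleftrightarrow> (\<forall>x\<in>frontier C. \<exists>!H. supporting_hyperplane C x H)"

definition normC :: "'a::euclidean_space set \<Rightarrow> 'a \<Rightarrow> real" where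
  "normC C x = Inf {s. s > 0 \<and> x \<in> (\<lambda>y. s *\<^sub>R y) ` C}"

definition phiC :: "'a::euclidean_space set \<Rightarrow> 'a \<Rightarrow> 'a" where
  "phiC C x = (SOME g. ((\<lambda>y. (normC C y)\<^sup>2 / 2) has_derivative (\<lambda>h. g \<bullet> h)) (at x))"

definition copyC :: "'a::euclidean_space set \<Rightarrow> ('v \<Rightarrow> 'a) \<Rightarrow> ('v \<Rightarrow> real) \<Rightarrow> 'v \<Rightarrow> 'a set" where
  "copyC C p r v = (\<lambda>x. r v *\<^sub>R x + p v) ` C"

definition C_packing :: "'a::euclidean_space set \<Rightarrow> 'v set \<Rightarrow> ('v \<Rightarrow> 'a) \<Rightarrow> ('v \<Rightarrow> real) \<Rightarrow> bool" where
  "C_packing C V p r \<longleftrightarrow> finite V \<and> (\<forall>v\<in>V. r v > 0) \<and>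
     (\<forall>v\<in>V. \<forall>w\<in>V. v \<noteq> w \<longrightarrow> interior (copyC C p r v) \<inter> interior (copyC C p r w) = {})"

definition contact_edge :: "'a::euclidean_space set \<Rightarrow> 'v set \<Rightarrow> ('v \<Rightarrow> 'a) \<Rightarrow> ('v \<Rightarrow> real) \<Rightarrow> 'v \<Rightarrow> 'v \<Rightarrow> bool" where
  "contact_edge C V p r v w \<longleftrightarrow> v \<in> V \<and> w \<in> V \<and> v \<noteq> w \<and> copyC C p r v \<inter> copyC C p r w \<noteq> {}"

definition isometryC :: "'a::euclidean_space set \<Rightarrow> ('a \<Rightarrow> 'a) \<Rightarrow> bool" where
  "isometryC C f \<longleftrightarrow> bij f \<and> (\<forall>x y. normC C (f x - f y) = normC C (x - y))"

definition infinitesimal_isometry :: "'a::euclidean_space set \<Rightarrow> ('a \<Rightarrow> 'a) \<Rightarrow> bool" where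
  "infinitesimal_isometry C g \<longleftrightarrow>
     (\<exists>\<gamma> :: real \<Rightarrow> 'a \<Rightarrow> 'a. (\<forall>t. isometryC C (\<gamma> t)) \<and> \<gamma> 0 = id \<and>
        (\<forall>x. ((\<lambda>t. \<gamma> t x) has_vector_derivative g x) (at 0)))"

text \<open>u is in the kernel of the rigidity matrix R_C(G,p).\<close>
definition is_flex :: "'a::euclidean_space set \<Rightarrow> 'v set \<Rightarrow> ('v \<Rightarrow> 'a) \<Rightarrow> ('v \<Rightarrow> real) \<Rightarrow> ('v \<Rightarrow> 'a) \<Rightarrow> bool" where
  "is_flex C V p r u \<longleftrightarrow>
     (\<forall>v w. contact_edge C V p r v w \<longrightarrow>
        phiC C (p v - p w) \<bullet> u v + phiC C (p w - p v) \<bullet> u w = 0)"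

definition trivial_flex :: "'a::euclidean_space set \<Rightarrow> 'v set \<Rightarrow> ('v \<Rightarrow> 'a) \<Rightarrow> ('v \<Rightarrow> 'a) \<Rightarrow> bool" where
  "trivial_flex C V p u \<longleftrightarrow>
     (\<exists>g. (\<exists>A b. linear A \<and> g = (\<lambda>x. A x + b)) \<and> infinitesimal_isometry C g \<and> (\<forall>v\<in>V. g (p v) = u v))"

definition well_positioned :: "'a::euclidean_space set \<Rightarrow> 'v set \<Rightarrow> ('v \<Rightarrow> 'a) \<Rightarrow> ('v \<Rightarrow> real) \<Rightarrow> bool" where
  "well_positioned C V p r \<longleftrightarrow>
     (\<forall>v w. contact_edge C V p r v w \<longrightarrow>
        p v \<noteq> p w \<and> normC C differentiable (at (p v - p w)))"

definition sticky_inf_rigid :: "'a::euclidean_space set \<Rightarrow> 'v set \<Rightarrow> ('v \<Rightarrow> 'a) \<Rightarrow> ('v \<Rightarrow> real) \<Rightarrow> bool" where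
  "sticky_inf_rigid C V p r \<longleftrightarrow> well_positioned C V p r \<and>
     (\<forall>u. is_flex C V p r u \<longrightarrow> trivial_flex C V p u)"

definition sticky_rigid :: "'a::euclidean_space set \<Rightarrow> 'v set \<Rightarrow> ('v \<Rightarrow> 'a) \<Rightarrow> ('v \<Rightarrow> real) \<Rightarrow> bool" where
  "sticky_rigid C V p r \<longleftrightarrow>
     (\<forall>\<delta>>0. \<forall>\<alpha> :: real \<Rightarrow> 'v \<Rightarrow> 'a.
        (\<forall>v\<in>V. continuous_on {0..\<delta>} (\<lambda>t. \<alpha> t v)) \<and> (\<forall>v\<in>V. \<alpha> 0 v = p v) \<and>
        (\<forall>v w t. contact_edge C V p r v w \<and> t \<in> {0..\<delta>} \<longrightarrow>
            normC C (\<alpha> t v - \<alpha> t w) = normC C (p v - p w))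
        \<longrightarrow> (\<forall>t\<in>{0..\<delta>}. \<exists>f. isometryC C f \<and> (\<forall>v\<in>V. \<alpha> t v = f (p v))))"

end

theory Submission
  imports Defs
begin

(*
  The gauge normC C is a norm equivalent to the Euclidean one, and by the Mazur-Ulam theorem its
  isometries are affine. Hence a sequence of isometries that is bounded at one point has a pointwise
  convergent subsequence whose limit is again an isometry, and every configuration q has an isometric
  image F o q that is closest to p in the least-squares sense.

  Suppose configurations q_n tend to p, keep the contact distances of p, and are not congruent to p.
  Replace q_n by its closest isometric image x_n and rescale the displacement x_n - p to unit length;
  a subsequence of the rescaled displacements converges to some d with sum |d v|^2 = 1.
  Differentiating the contact constraints shows that d is a flex, hence a trivial one, induced by an
  infinitesimal isometry g. Minimality of x_n gives sum g (x_n v) . (x_n v - p v) = 0, and dividing by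
  the scale and passing to the limit yields sum |d v|^2 = 0, a contradiction. So every configuration
  close to p with the contact distances of p is congruent to p, and along a continuous motion that
  keeps the contact distances, congruence to p is an open and closed condition on the time interval.
*)

section \<open>The gauge of a symmetric convex body\<close>

locale symmetric_convex_body =
  fixes C :: "'a::euclidean_space set"
  assumes cs_convex_body: "cs_convex_body C"
begin

lemma body_convex: "convex C" and body_bounded: "bounded C"
  using cs_convex_body by (auto simp: cs_convex_body_def compact_imp_bounded)

lemma body_uminus: "x \<in> C \<Longrightarrow> - x \<in> C"
  using cs_convex_body unfolding cs_convex_body_def by (metis image_eqI)

lemma zero_in_interior: "0 \<in> interior C"
proof -
  obtain x where x: "x \<in> interior C"
    using cs_convex_body by (auto simp: cs_convex_body_def)
  have "interior C = uminus ` interior C"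
    using cs_convex_body interior_negations[of C] by (simp add: cs_convex_body_def)
  then have "- x \<in> interior C"
    using x by (metis image_eqI minus_minus)
  then have "(1/2) *\<^sub>R x + (1/2) *\<^sub>R (- x) \<in> interior C"
    using x body_convex by (intro convexD) auto
  then show ?thesis
    by simp
qed

lemma zero_in_body: "0 \<in> C"
  using zero_in_interior interior_subset by blast

abbreviation dilations :: "'a \<Rightarrow> real set" where
  "dilations x \<equiv> {s. s > 0 \<and> x \<in> (\<lambda>y. s *\<^sub>R y) ` C}"

lemma dilations_upward_closed:
  assumes "s \<in> dilations x" and "s \<le> t"
  shows "t \<in> dilations x"
proof -
  obtain y where y: "y \<in> C" "x = s *\<^sub>R y" and "s > 0"
    using assms(1) by auto
  with assms(2) have t: "t > 0"
    by simp
  have "(s/t) *\<^sub>R y + (1 - s/t) *\<^sub>R 0 \<in> C"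
    using y t assms \<open>s > 0\<close> body_convex zero_in_body by (intro convexD) auto
  moreover have "x = t *\<^sub>R ((s/t) *\<^sub>R y + (1 - s/t) *\<^sub>R 0)"
    using y t by simp
  ultimately show ?thesis
    using t by blast
qed

lemma inner_radius:
  obtains \<rho> where "\<rho> > 0" "\<And>x s. s > 0 \<Longrightarrow> norm x \<le> s * \<rho> \<Longrightarrow> s \<in> dilations x"
proof -
  obtain \<rho> where \<rho>: "\<rho> > 0" "cball 0 \<rho> \<subseteq> C"
    using zero_in_interior mem_interior_cball by blast
  have "s \<in> dilations x" if "s > 0" "norm x \<le> s * \<rho>" for x s
  proof -
    have "(1/s) *\<^sub>R x \<in> C"
      using \<rho>(2) that by (auto simp: field_simps)
    moreover have "x = s *\<^sub>R ((1/s) *\<^sub>R x)"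
      using that by simp
    ultimately show ?thesis
      using that by blast
  qed
  with \<rho> that show thesis
    by blast
qed

lemma outer_radius:
  obtains R where "R > 0" "\<And>x s. s \<in> dilations x \<Longrightarrow> norm x \<le> s * R"
proof -
  obtain R where R: "R > 0" "\<And>y. y \<in> C \<Longrightarrow> norm y \<le> R"
    using body_bounded bounded_pos by blast
  have "norm x \<le> s * R" if s: "s \<in> dilations x" for x s
  proof -
    obtain y where "y \<in> C" "x = s *\<^sub>R y" "s > 0"
      using s by auto
    then show ?thesis
      using R(2) by (simp add: mult_left_mono)
  qed
  with R that show thesis
    by blast
qed

lemma dilations_nonempty: "dilations x \<noteq> {}"
proof -
  obtain \<rho> where \<rho>: "\<rho> > 0" "\<And>x s. s > 0 \<Longrightarrow> norm x \<le> s * \<rho> \<Longrightarrow> s \<in> dilations x"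
    using inner_radius by blast
  have "norm x \<le> (norm x / \<rho> + 1) * \<rho>"
    using \<rho>(1) by (simp add: distrib_right)
  then have "norm x / \<rho> + 1 \<in> dilations x"
    using \<rho> by (intro \<rho>(2)) (auto intro: add_nonneg_pos)
  then show ?thesis
    by blast
qed

lemma normC_le: "s \<in> dilations x \<Longrightarrow> normC C x \<le> s"
  unfolding normC_def by (rule cInf_lower) (auto intro: bdd_belowI[of _ 0])

lemma normC_nonneg: "normC C x \<ge> 0"
  unfolding normC_def using dilations_nonempty by (rule cInf_greatest) auto

lemma dilations_greater_normC:
  assumes "t > normC C x"
  shows "t \<in> dilations x"
proof -
  obtain s where "s \<in> dilations x" "s < t"
    using cInf_lessD[OF dilations_nonempty] assms unfolding normC_def by blast
  then show ?thesis
    using dilations_upward_closed less_imp_le by blast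
qed

lemma normC_le_norm:
  obtains b where "b > 0" "\<And>x. normC C x \<le> b * norm x"
proof -
  obtain \<rho> where \<rho>: "\<rho> > 0" "\<And>x s. s > 0 \<Longrightarrow> norm x \<le> s * \<rho> \<Longrightarrow> s \<in> dilations x"
    using inner_radius by blast
  have "normC C x \<le> (1 / \<rho>) * norm x + e" if "e > 0" for x e
    using that \<rho> by (intro normC_le \<rho>(2)) (auto simp: field_simps intro!: add_nonneg_pos)
  then have "normC C x \<le> (1 / \<rho>) * norm x" for x
    by (rule field_le_epsilon)
  then show thesis
    by (rule that[rotated]) (use \<rho>(1) in simp)
qed

lemma norm_le_normC:
  obtains a where "a > 0" "\<And>x. norm x \<le> a * normC C x"
proof -
  obtain R where R: "R > 0" "\<And>x s. s \<in> dilations x \<Longrightarrow> norm x \<le> s * R"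
    using outer_radius by blast
  have "norm x \<le> R * normC C x + e" if "e > 0" for x e
  proof -
    have "norm x \<le> (normC C x + e / R) * R"
      using that R by (intro R(2) dilations_greater_normC) simp
    also have "\<dots> = R * normC C x + e"
      using R(1) by (simp add: field_simps)
    finally show ?thesis .
  qed
  then have "norm x \<le> R * normC C x" for x
    by (rule field_le_epsilon)
  with R(1) that show thesis
    by blast
qed

lemma normC_eq_0_iff [simp]: "normC C x = 0 \<longleftrightarrow> x = 0"
proof -
  obtain a where "a > 0" "norm x \<le> a * normC C x"
    using norm_le_normC by blast
  moreover obtain b where "b > 0" "normC C x \<le> b * norm x"
    using normC_le_norm by blast
  ultimately show ?thesis
    using normC_nonneg[of x] by (auto intro: order_antisym)
qed

lemma normC_zero [simp]: "normC C 0 = 0"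
  by simp

lemma normC_scaleR_pos_le:
  assumes "c > 0"
  shows "normC C (c *\<^sub>R x) \<le> c * normC C x"
proof (rule field_le_epsilon)
  fix e :: real
  assume "e > 0"
  define s where "s = normC C x + e / c"
  with assms \<open>e > 0\<close> have "s \<in> dilations x"
    by (intro dilations_greater_normC) simp
  then obtain y where y: "y \<in> C" "x = s *\<^sub>R y" "s > 0"
    by blast
  then have "c *\<^sub>R x = (c * s) *\<^sub>R y"
    by simp
  with y assms have "c * s \<in> dilations (c *\<^sub>R x)"
    by auto
  then have "normC C (c *\<^sub>R x) \<le> c * s"
    by (rule normC_le)
  then show "normC C (c *\<^sub>R x) \<le> c * normC C x + e"
    using assms by (simp add: s_def distrib_left)
qed

lemma normC_minus [simp]: "normC C (- x) = normC C x"
proof -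
  have "- x \<in> (\<lambda>y. s *\<^sub>R y) ` C" if "x \<in> (\<lambda>y. s *\<^sub>R y) ` C" for x s
    using that body_uminus by (auto intro!: image_eqI[where x = "- _"])
  from this[of x] this[of "- x"] have "dilations (- x) = dilations x"
    by auto
  then show ?thesis
    by (simp add: normC_def)
qed

lemma normC_minus_commute: "normC C (x - y) = normC C (y - x)"
  by (metis minus_diff_eq normC_minus)

lemma normC_scaleR [simp]: "normC C (c *\<^sub>R x) = \<bar>c\<bar> * normC C x"
proof -
  have pos: "normC C (c *\<^sub>R x) = c * normC C x" if "c > 0" for c x
  proof -
    have "c * normC C x = c * normC C ((1/c) *\<^sub>R (c *\<^sub>R x))"
      using that by simp
    also have "\<dots> \<le> normC C (c *\<^sub>R x)"
      using that normC_scaleR_pos_le[of "1/c" "c *\<^sub>R x"] by (simp add: field_simps)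
    finally show ?thesis
      using normC_scaleR_pos_le[OF that, of x] by linarith
  qed
  consider "c > 0" | "c = 0" | "- c > 0"
    by linarith
  then show ?thesis
  proof cases
    case 3
    then have "normC C (c *\<^sub>R x) = normC C ((- c) *\<^sub>R (- x))"
      by simp
    also have "\<dots> = - c * normC C x"
      using pos[OF 3] by simp
    finally show ?thesis
      using 3 by simp
  qed (simp_all add: pos)
qed

lemma normC_triangle: "normC C (x + y) \<le> normC C x + normC C y"
proof (rule field_le_epsilon)
  fix e :: real
  assume "e > 0"
  define s t where "s = normC C x + e/2" and "t = normC C y + e/2"
  have "s \<in> dilations x" "t \<in> dilations y"
    unfolding s_def t_def using \<open>e > 0\<close> by (intro dilations_greater_normC; simp)+
  then obtain a b where ab: "a \<in> C" "x = s *\<^sub>R a" "b \<in> C" "y = t *\<^sub>R b" and st: "s > 0" "t > 0"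
    by blast
  have "(s/(s+t)) *\<^sub>R a + (t/(s+t)) *\<^sub>R b \<in> C"
    using ab st body_convex by (intro convexD) (auto simp: add_divide_distrib[symmetric])
  moreover have "x + y = (s+t) *\<^sub>R ((s/(s+t)) *\<^sub>R a + (t/(s+t)) *\<^sub>R b)"
    using ab st by (simp add: scaleR_add_right)
  ultimately have "s + t \<in> dilations (x + y)"
    using st by (metis (mono_tags, lifting) add_pos_pos image_eqI mem_Collect_eq)
  then have "normC C (x + y) \<le> s + t"
    by (rule normC_le)
  then show "normC C (x + y) \<le> normC C x + normC C y + e"
    by (simp add: s_def t_def)
qed

lemma normC_triangle_diff: "normC C (x - z) \<le> normC C (x - y) + normC C (y - z)"
  using normC_triangle[of "x - y" "y - z"] by simp

lemma continuous_normC: "continuous_on UNIV (normC C)"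
proof -
  obtain b where b: "b > 0" "\<And>x. normC C x \<le> b * norm x"
    using normC_le_norm by blast
  have "b-lipschitz_on UNIV (normC C)"
  proof (rule lipschitz_onI)
    fix x y
    show "dist (normC C x) (normC C y) \<le> b * dist x y"
      using normC_triangle[of y "x - y"] normC_triangle[of x "y - x"] b(2)[of "x - y"] b(2)[of "y - x"]
      by (simp add: dist_norm dist_real_def norm_minus_commute)
  qed (use b(1) in simp)
  then show ?thesis
    by (rule lipschitz_on_continuous_on)
qed

lemma isCont_normC: "isCont (normC C) x"
  using continuous_normC by (simp add: continuous_on_eq_continuous_at)

lemma tendsto_normC [tendsto_intros]:
  "(f \<longlongrightarrow> l) F \<Longrightarrow> ((\<lambda>x. normC C (f x)) \<longlongrightarrow> normC C l) F"
  by (rule isCont_tendsto_compose[OF isCont_normC])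

end

section \<open>Isometries and the Mazur--Ulam theorem\<close>

lemma isometryC_normC: "isometryC C f \<Longrightarrow> normC C (f x - f y) = normC C (x - y)"
  by (simp add: isometryC_def)

lemma isometryC_id: "isometryC C id"
  by (simp add: isometryC_def)

lemma isometryC_comp: "isometryC C f \<Longrightarrow> isometryC C g \<Longrightarrow> isometryC C (f \<circ> g)"
  by (auto simp: isometryC_def bij_comp)

lemma isometryC_inv_f [simp]: "isometryC C f \<Longrightarrow> inv f (f x) = x"
  by (simp add: isometryC_def bij_is_inj)

lemma isometryC_f_inv [simp]: "isometryC C f \<Longrightarrow> f (inv f x) = x"
  by (simp add: isometryC_def bij_is_surj surj_f_inv_f)

lemma isometryC_inv:
  assumes "isometryC C f"
  shows "isometryC C (inv f)"
proof -
  have "normC C (inv f x - inv f y) = normC C (x - y)" for x y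
    using isometryC_normC[OF assms, of "inv f x" "inv f y"] assms by simp
  with assms show ?thesis
    by (simp add: isometryC_def bij_imp_bij_inv)
qed

lemma additive_scaleR_of_int:
  fixes g :: "'a::real_vector \<Rightarrow> 'b::real_vector"
  assumes add: "\<And>x y. g (x + y) = g x + g y"
  shows "g (of_int k *\<^sub>R x) = of_int k *\<^sub>R g x"
proof -
  interpret additive g
    by unfold_locales (rule add)
  have of_nat: "g (of_nat n *\<^sub>R x) = of_nat n *\<^sub>R g x" for n
    by (induction n) (simp_all add: zero add scaleR_add_left)
  show ?thesis
  proof (cases "k \<ge> 0")
    case True
    then show ?thesis
      using of_nat[of "nat k"] by simp
  next
    case False
    then have "of_int k *\<^sub>R x = - (of_nat (nat (- k)) *\<^sub>R x)"
      by simp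
    then show ?thesis
      using False of_nat[of "nat (- k)"] by (simp add: minus)
  qed
qed

lemma additive_scaleR_rat:
  fixes g :: "'a::real_vector \<Rightarrow> 'b::real_vector"
  assumes add: "\<And>x y. g (x + y) = g x + g y" and "q \<in> \<rat>"
  shows "g (q *\<^sub>R x) = q *\<^sub>R g x"
proof -
  obtain a b where b: "b > 0" and q: "q = of_int a / of_int b"
    using \<open>q \<in> \<rat>\<close> Rats_cases' by metis
  have "of_int b *\<^sub>R g (q *\<^sub>R x) = g ((of_int b * q) *\<^sub>R x)"
    using additive_scaleR_of_int[OF add, of b "q *\<^sub>R x"] by simp
  also have "of_int b * q = of_int a"
    using b q by simp
  finally have "of_int b *\<^sub>R g (q *\<^sub>R x) = of_int a *\<^sub>R g x"
    by (simp add: additive_scaleR_of_int[OF add])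
  then have "(1 / of_int b) *\<^sub>R (of_int b *\<^sub>R g (q *\<^sub>R x)) = (of_int a / of_int b) *\<^sub>R g x"
    by simp
  then show ?thesis
    using b q by simp
qed

lemma linear_if_additive_continuous:
  fixes g :: "'a::real_normed_vector \<Rightarrow> 'b::real_normed_vector"
  assumes add: "\<And>x y. g (x + y) = g x + g y" and cont: "continuous_on UNIV g"
  shows "linear g"
proof -
  have "g (c *\<^sub>R x) = c *\<^sub>R g x" for c x
  proof -
    have "closed {c. g (c *\<^sub>R x) = c *\<^sub>R g x}"
      by (intro closed_Collect_eq continuous_on_compose2[OF cont] continuous_intros) auto
    moreover have "\<rat> \<subseteq> {c. g (c *\<^sub>R x) = c *\<^sub>R g x}"
      using additive_scaleR_rat[OF add] by blast
    ultimately have "closure \<rat> \<subseteq> {c. g (c *\<^sub>R x) = c *\<^sub>R g x}"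
      by (intro closure_minimal)
    then show ?thesis
      by (simp add: Rats_closure_real subset_iff)
  qed
  with add show ?thesis
    by (intro linearI)
qed

lemma linear_if_midpoint_preserving:
  fixes g :: "'a::real_normed_vector \<Rightarrow> 'b::real_normed_vector"
  assumes "g 0 = 0" and mid: "\<And>x y. g ((1/2) *\<^sub>R (x + y)) = (1/2) *\<^sub>R (g x + g y)"
    and "continuous_on UNIV g"
  shows "linear g"
proof (rule linear_if_additive_continuous)
  fix x y
  have "g (x + y) = 2 *\<^sub>R g ((1/2) *\<^sub>R (x + y))"
    using mid[of "x + y" 0] \<open>g 0 = 0\<close> by simp
  also have "\<dots> = g x + g y"
    by (simp add: mid)
  finally show "g (x + y) = g x + g y" .
qed fact

context symmetric_convex_body
begin

lemma isometryC_point_reflection: "isometryC C (\<lambda>u. m - u)"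
proof -
  have "bij (\<lambda>u. m - u)"
    by (rule o_bij[where g = "\<lambda>u. m - u"]) auto
  moreover have "normC C ((m - x) - (m - y)) = normC C (x - y)" for x y
    using normC_minus_commute[of y x] by simp
  ultimately show ?thesis
    by (simp add: isometryC_def)
qed

lemma isometryC_lipschitz:
  obtains K where "K > 0" "\<And>f x y. isometryC C f \<Longrightarrow> norm (f x - f y) \<le> K * norm (x - y)"
proof -
  obtain a where a: "a > 0" "\<And>x. norm x \<le> a * normC C x"
    using norm_le_normC by blast
  obtain b where b: "b > 0" "\<And>x. normC C x \<le> b * norm x"
    using normC_le_norm by blast
  have "norm (f x - f y) \<le> (a * b) * norm (x - y)" if f: "isometryC C f" for f x y
  proof -
    have "norm (f x - f y) \<le> a * normC C (x - y)"
      using a(2)[of "f x - f y"] isometryC_normC[OF f] by simp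
    also have "\<dots> \<le> a * (b * norm (x - y))"
      using a(1) b(2) by (intro mult_left_mono) auto
    finally show ?thesis
      by (simp add: mult.assoc)
  qed
  then show thesis
    using a(1) b(1) by (intro that[of "a * b"]) auto
qed

lemma isometryC_continuous:
  assumes "isometryC C f"
  shows "continuous_on UNIV f"
proof -
  obtain K where "K > 0" "\<And>f x y. isometryC C f \<Longrightarrow> norm (f x - f y) \<le> K * norm (x - y)"
    using isometryC_lipschitz by blast
  with assms have "K-lipschitz_on UNIV f"
    by (intro lipschitz_onI) (auto simp: dist_norm)
  then show ?thesis
    by (rule lipschitz_on_continuous_on)
qed

lemma isometryC_fixing_pair_doubling:
  assumes h: "isometryC C h" "h x = x" "h y = y"
  defines "z \<equiv> (1/2) *\<^sub>R (x + y)"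
  obtains h' where "isometryC C h'" "h' x = x" "h' y = y"
    "normC C (h' z - z) = 2 * normC C (h z - z)"
proof -
  define \<psi> where "\<psi> = (\<lambda>u. (x + y) - u)"
  define h' where "h' = \<psi> \<circ> inv h \<circ> \<psi> \<circ> h"
  have "isometryC C h'"
    unfolding h'_def \<psi>_def using h(1) by (intro isometryC_comp isometryC_inv isometryC_point_reflection)
  moreover have "inv h x = x" "inv h y = y"
    using isometryC_inv_f[OF h(1), of x] isometryC_inv_f[OF h(1), of y] h by simp_all
  then have "h' x = x" "h' y = y"
    by (simp_all add: h'_def \<psi>_def h)
  moreover have "normC C (h' z - z) = 2 * normC C (h z - z)"
  proof -
    have "h' z - z = z - inv h (\<psi> (h z))"
      by (simp add: h'_def \<psi>_def z_def algebra_simps scaleR_2[symmetric])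
    then have "normC C (h' z - z) = normC C (h z - h (inv h (\<psi> (h z))))"
      using isometryC_normC[OF h(1), of z "inv h (\<psi> (h z))"] by simp
    also have "h z - h (inv h (\<psi> (h z))) = 2 *\<^sub>R (h z - z)"
      using h(1) by (simp add: \<psi>_def z_def scaleR_2 algebra_simps)
    finally show ?thesis
      by simp
  qed
  ultimately show thesis
    by (rule that)
qed

text \<open>Vaisala's proof of the Mazur--Ulam theorem: the displacements of the midpoint under
  isometries fixing \<open>x\<close> and \<open>y\<close> form a bounded set of reals that is closed under doubling.\<close>

lemma isometryC_fixes_midpoint:
  assumes g: "isometryC C g" "g x = x" "g y = y"
  shows "g ((1/2) *\<^sub>R (x + y)) = (1/2) *\<^sub>R (x + y)"
proof -
  define z where "z = (1/2) *\<^sub>R (x + y)"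
  define \<Lambda> where "\<Lambda> = {normC C (h z - z) | h. isometryC C h \<and> h x = x \<and> h y = y}"
  have bounded: "l \<le> 2 * normC C (x - z)" if l: "l \<in> \<Lambda>" for l
  proof -
    obtain h where h: "isometryC C h" "h x = x" "l = normC C (h z - z)"
      using l unfolding \<Lambda>_def by blast
    have "l \<le> normC C (h z - h x) + normC C (h x - z)"
      using h(3) normC_triangle_diff by simp
    also have "\<dots> = normC C (z - x) + normC C (x - z)"
      using h isometryC_normC by metis
    finally show ?thesis
      using normC_minus_commute[of z x] by simp
  qed
  have doubled: "2 * l \<in> \<Lambda>" if l: "l \<in> \<Lambda>" for l
  proof -
    obtain h where "isometryC C h" "h x = x" "h y = y" "l = normC C (h z - z)"
      using l unfolding \<Lambda>_def by blast
    then obtain h' where h': "isometryC C h'" "h' x = x" "h' y = y" "normC C (h' z - z) = 2 * l"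
      unfolding z_def by (metis isometryC_fixing_pair_doubling)
    then have "2 * l = normC C (h' z - z) \<and> isometryC C h' \<and> h' x = x \<and> h' y = y"
      by simp
    then show ?thesis
      unfolding \<Lambda>_def by blast
  qed
  have g_in: "normC C (g z - z) \<in> \<Lambda>"
    using g by (auto simp: \<Lambda>_def)
  have bdd: "bdd_above \<Lambda>"
    using bounded by (rule bdd_aboveI)
  have "Sup \<Lambda> \<le> Sup \<Lambda> / 2"
    using g_in doubled cSup_upper[OF _ bdd] by (intro cSup_least) fastforce+
  then have "normC C (g z - z) \<le> 0"
    using cSup_upper[OF g_in bdd] by simp
  then show ?thesis
    using normC_nonneg[of "g z - z"] by (simp add: z_def)
qed

lemma isometryC_midpoint:
  assumes f: "isometryC C f"
  shows "f ((1/2) *\<^sub>R (x + y)) = (1/2) *\<^sub>R (f x + f y)"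
proof -
  define z where "z = (1/2) *\<^sub>R (x + y)"
  define h where "h = (\<lambda>u. (x + y) - u) \<circ> inv f \<circ> (\<lambda>u. (f x + f y) - u) \<circ> f"
  have "isometryC C h"
    unfolding h_def using f by (intro isometryC_comp isometryC_inv isometryC_point_reflection)
  moreover have "h x = x" "h y = y"
    by (simp_all add: h_def isometryC_inv_f[OF f])
  ultimately have "h z = z"
    unfolding z_def by (rule isometryC_fixes_midpoint)
  moreover have "h z = (x + y) - inv f ((f x + f y) - f z)"
    by (simp add: h_def)
  moreover have "x + y = 2 *\<^sub>R z"
    by (simp add: z_def)
  ultimately have "inv f ((f x + f y) - f z) = z"
    by (simp add: scaleR_2)
  then have "(f x + f y) - f z = f z"
    using isometryC_f_inv[OF f] by metis
  then have "f x + f y = 2 *\<^sub>R f z"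
    by (simp add: scaleR_2 algebra_simps)
  then show ?thesis
    by (simp add: z_def)
qed

lemma isometryC_affine:
  assumes f: "isometryC C f"
  shows "linear (\<lambda>x. f x - f 0)"
proof (rule linear_if_midpoint_preserving)
  show "continuous_on UNIV (\<lambda>x. f x - f 0)"
    using isometryC_continuous[OF f] by (intro continuous_intros)
  fix x y
  show "f ((1/2) *\<^sub>R (x + y)) - f 0 = (1/2) *\<^sub>R (f x - f 0 + (f y - f 0))"
    using isometryC_midpoint[OF f, of x y] by (simp add: algebra_simps scaleR_2[symmetric])
qed simp

lemma isometryC_linear_translation:
  assumes A: "linear A" and norm_A: "\<And>x. normC C (A x) = normC C x"
  shows "isometryC C (\<lambda>x. A x + b)"
proof -
  have "inj A"
    using A norm_A by (simp add: linear_injective_0) (metis normC_eq_0_iff)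
  moreover have "surj A"
    using A \<open>inj A\<close> linear_injective_imp_surjective by blast
  ultimately have "bij A"
    by (simp add: bij_def)
  moreover have "bij (\<lambda>x. x + b)"
    by (rule o_bij[where g = "\<lambda>x. x - b"]) auto
  ultimately have "bij ((\<lambda>x. x + b) \<circ> A)"
    by (rule bij_comp)
  moreover have "normC C ((A x + b) - (A y + b)) = normC C (x - y)" for x y
    using norm_A[of "x - y"] by (simp add: linear_diff[OF A])
  ultimately show ?thesis
    by (simp add: isometryC_def o_def)
qed

end

section \<open>Compactness of the isometry group\<close>

lemma convergent_subsequence_finite_family:
  fixes X :: "nat \<Rightarrow> 'i \<Rightarrow> 'b::heine_borel"
  assumes "finite I" and "\<And>i. i \<in> I \<Longrightarrow> bounded (range (\<lambda>n. X n i))"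
  obtains r l where "strict_mono r" "\<And>i. i \<in> I \<Longrightarrow> (\<lambda>n. X (r n) i) \<longlonglongrightarrow> l i"
proof -
  have "\<forall>\<delta>\<subseteq>I. \<exists>l r. strict_mono r \<and>
      (\<forall>e>0. eventually (\<lambda>n. \<forall>i\<in>\<delta>. dist (X (r n) i) (l i) < e) sequentially)"
    by (rule compact_lemma_general[where proj = "\<lambda>x i. x i" and unproj = id])
      (use assms in \<open>auto simp: image_image\<close>)
  then obtain l r where r: "strict_mono r"
    and l: "\<And>e. e > 0 \<Longrightarrow> eventually (\<lambda>n. \<forall>i\<in>I. dist (X (r n) i) (l i) < e) sequentially"
    by (meson order_refl)
  have "(\<lambda>n. X (r n) i) \<longlonglongrightarrow> l i" if "i \<in> I" for i
    unfolding tendsto_iff using l that by (fast elim: eventually_mono)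
  with r that show thesis
    by blast
qed

lemma linear_basis_expansion:
  fixes g :: "'a::euclidean_space \<Rightarrow> 'b::real_vector"
  assumes "linear g"
  shows "g x = (\<Sum>e\<in>Basis. (x \<bullet> e) *\<^sub>R g e)"
proof -
  have "g x = g (\<Sum>e\<in>Basis. (x \<bullet> e) *\<^sub>R e)"
    by (simp add: euclidean_representation)
  also have "\<dots> = (\<Sum>e\<in>Basis. (x \<bullet> e) *\<^sub>R g e)"
    by (simp add: linear_sum[OF assms] linear_scale[OF assms])
  finally show ?thesis .
qed

context symmetric_convex_body
begin

lemma isometryC_bounded_range:
  assumes f: "\<And>n. isometryC C (f n)" and bounded: "bounded (range (\<lambda>n. f n a))"
  shows "bounded (range (\<lambda>n. f n b))"
proof -
  obtain K where K: "\<And>f x y. isometryC C f \<Longrightarrow> norm (f x - f y) \<le> K * norm (x - y)"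
    using isometryC_lipschitz by metis
  obtain B where B: "\<And>n. norm (f n a) \<le> B"
    using bounded by (auto simp: bounded_iff)
  have "norm (f n b) \<le> B + K * norm (b - a)" for n
    using B[of n] K[OF f, of n b a] norm_triangle_sub[of "f n b" "f n a"] by linarith
  then show ?thesis
    by (auto simp: bounded_iff)
qed

lemma isometryC_convergent_subsequence:
  fixes f :: "nat \<Rightarrow> 'a \<Rightarrow> 'a"
  assumes f: "\<And>n. isometryC C (f n)" and bounded: "bounded (range (\<lambda>n. f n a))"
  obtains r F where "strict_mono r" "isometryC C F" "\<And>x. (\<lambda>n. f (r n) x) \<longlonglongrightarrow> F x"
proof -
  have "bounded (range (\<lambda>n. f n b))" for b
    using f bounded by (rule isometryC_bounded_range)
  moreover have "finite (insert 0 (Basis :: 'a set))"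
    by simp
  ultimately obtain r L where r: "strict_mono r"
    and L: "\<And>i. i \<in> insert 0 Basis \<Longrightarrow> (\<lambda>n. f (r n) i) \<longlonglongrightarrow> L i"
    using convergent_subsequence_finite_family[of "insert 0 Basis" f] by blast
  define A where "A = (\<lambda>x. \<Sum>e\<in>Basis. (x \<bullet> e) *\<^sub>R (L e - L 0))"
  have A: "linear A"
    unfolding A_def by (intro linearI) (simp_all add: inner_add_left scaleR_add_left sum.distrib scaleR_sum_right)
  have conv: "(\<lambda>n. f (r n) x) \<longlonglongrightarrow> A x + L 0" for x
  proof -
    have "f (r n) x = (\<Sum>e\<in>Basis. (x \<bullet> e) *\<^sub>R (f (r n) e - f (r n) 0)) + f (r n) 0" for n
      using linear_basis_expansion[OF isometryC_affine[OF f[of "r n"]], of x] by (simp only: diff_eq_eq)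
    moreover have "(\<lambda>n. (\<Sum>e\<in>Basis. (x \<bullet> e) *\<^sub>R (f (r n) e - f (r n) 0)) + f (r n) 0) \<longlonglongrightarrow> A x + L 0"
      unfolding A_def by (intro tendsto_intros L) auto
    ultimately show ?thesis
      by simp
  qed
  have "normC C (A x) = normC C x" for x
  proof -
    have "(\<lambda>n. normC C (f (r n) x - f (r n) 0)) \<longlonglongrightarrow> normC C ((A x + L 0) - (A 0 + L 0))"
      by (intro tendsto_intros conv)
    moreover have "normC C (f (r n) x - f (r n) 0) = normC C x" for n
      using isometryC_normC[OF f] by simp
    ultimately have "(\<lambda>n. normC C x) \<longlonglongrightarrow> normC C (A x)"
      using linear_0[OF A] by simp
    then show ?thesis
      by (simp add: LIMSEQ_const_iff)
  qed
  with A have "isometryC C (\<lambda>x. A x + L 0)"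
    by (rule isometryC_linear_translation)
  then show thesis
    by (rule that[OF r _ conv])
qed

end

section \<open>Closest isometric images\<close>

definition sq_deviation :: "'v set \<Rightarrow> ('v \<Rightarrow> 'a::real_normed_vector) \<Rightarrow> ('v \<Rightarrow> 'a) \<Rightarrow> real" where
  "sq_deviation V p q = (\<Sum>v\<in>V. (norm (q v - p v))\<^sup>2)"

lemma sq_deviation_nonneg: "sq_deviation V p q \<ge> 0"
  unfolding sq_deviation_def by (intro sum_nonneg) simp

lemma norm_le_sqrt_sq_deviation:
  assumes "finite V" and "v \<in> V"
  shows "norm (q v - p v) \<le> sqrt (sq_deviation V p q)"
  unfolding sq_deviation_def
  by (intro real_le_rsqrt member_le_sum[of v V "\<lambda>v. (norm (q v - p v))\<^sup>2"] assms) simp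

lemma sq_deviation_eq_0_iff:
  assumes "finite V"
  shows "sq_deviation V p q = 0 \<longleftrightarrow> (\<forall>v\<in>V. q v = p v)"
  using assms by (simp add: sq_deviation_def sum_nonneg_eq_0_iff)

lemma minimizing_subsequence_limit_le:
  fixes \<phi> :: "nat \<Rightarrow> real"
  assumes lim: "(\<lambda>n. \<phi> (r n)) \<longlonglongrightarrow> L" and r: "strict_mono r"
    and \<phi>: "\<And>n. \<phi> n < m + inverse (Suc n)"
  shows "L \<le> m"
proof (rule LIMSEQ_le[OF lim])
  show "(\<lambda>n. m + inverse (Suc n)) \<longlonglongrightarrow> m"
    using tendsto_add[OF tendsto_const LIMSEQ_inverse_real_of_nat, of m] by simp
  have "\<phi> (r n) \<le> m + inverse (Suc n)" for n
  proof -
    have "inverse (real (Suc (r n))) \<le> inverse (real (Suc n))"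
      using seq_suble[OF r, of n] by (intro le_imp_inverse_le) simp_all
    then show ?thesis
      using \<phi>[of "r n"] by linarith
  qed
  then show "\<exists>N. \<forall>n\<ge>N. \<phi> (r n) \<le> m + inverse (Suc n)"
    by blast
qed

context symmetric_convex_body
begin

lemma closest_isometric_image_exists:
  assumes "finite V"
  obtains F where "isometryC C F"
    "\<And>G. isometryC C G \<Longrightarrow> sq_deviation V p (F \<circ> q) \<le> sq_deviation V p (G \<circ> q)"
proof (cases "V = {}")
  case True
  then show thesis
    using that[OF isometryC_id] by (simp add: sq_deviation_def)
next
  case False
  then obtain v0 where v0: "v0 \<in> V"
    by blast
  define m where "m = (INF G\<in>{G. isometryC C G}. sq_deviation V p (G \<circ> q))"
  have nonempty: "{G. isometryC C G} \<noteq> {}"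
    using isometryC_id by blast
  have bdd: "bdd_below ((\<lambda>G. sq_deviation V p (G \<circ> q)) ` {G. isometryC C G})"
    using sq_deviation_nonneg by (intro bdd_belowI2)
  have m_le: "m \<le> sq_deviation V p (G \<circ> q)" if "isometryC C G" for G
    unfolding m_def using that by (intro cINF_lower[OF bdd]) simp
  have "\<exists>G. isometryC C G \<and> sq_deviation V p (G \<circ> q) < m + inverse (Suc n)" for n
    using cINF_less_iff[OF nonempty bdd, of "m + inverse (Suc n)"] unfolding m_def by simp
  then obtain G where G: "\<And>n. isometryC C (G n)"
    and G_dev: "\<And>n. sq_deviation V p (G n \<circ> q) < m + inverse (Suc n)"
    by metis
  have "norm (G n (q v0)) \<le> norm (p v0) + sqrt (m + 1)" for n
  proof -
    have "norm (G n (q v0) - p v0) \<le> sqrt (sq_deviation V p (G n \<circ> q))"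
      using norm_le_sqrt_sq_deviation[OF assms v0, where q = "G n \<circ> q" and p = p] by simp
    also have "\<dots> \<le> sqrt (m + 1)"
      using G_dev[of n] inverse_le_1_iff[of "real (Suc n)"] by (intro real_sqrt_le_mono) simp
    finally show ?thesis
      using norm_triangle_sub[of "G n (q v0)" "p v0"] by linarith
  qed
  then have "bounded (range (\<lambda>n. G n (q v0)))"
    by (auto simp: bounded_iff)
  then obtain r F where r: "strict_mono r" and F: "isometryC C F"
    and conv: "\<And>x. (\<lambda>n. G (r n) x) \<longlonglongrightarrow> F x"
    by (rule isometryC_convergent_subsequence[of G, OF G]) blast
  have "(\<lambda>n. sq_deviation V p (G (r n) \<circ> q)) \<longlonglongrightarrow> sq_deviation V p (F \<circ> q)"
    unfolding sq_deviation_def o_def by (intro tendsto_intros conv)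
  then have "sq_deviation V p (F \<circ> q) \<le> m"
    using r G_dev by (rule minimizing_subsequence_limit_le)
  then show thesis
    using F m_le that by (meson order_trans)
qed

end

lemma closest_isometric_image_orthogonal:
  assumes F: "isometryC C F"
    and closest: "\<And>G. isometryC C G \<Longrightarrow> sq_deviation V p (F \<circ> q) \<le> sq_deviation V p (G \<circ> q)"
    and g: "infinitesimal_isometry C g"
  shows "(\<Sum>v\<in>V. g (F (q v)) \<bullet> (F (q v) - p v)) = 0"
proof -
  obtain \<gamma> :: "real \<Rightarrow> 'a \<Rightarrow> 'a" where \<gamma>: "\<And>t. isometryC C (\<gamma> t)" "\<gamma> 0 = id"
    and \<gamma>_deriv: "\<And>x. ((\<lambda>t. \<gamma> t x) has_vector_derivative g x) (at 0)"
    using g unfolding infinitesimal_isometry_def by blast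
  define x where "x = F \<circ> q"
  define \<phi> where "\<phi> = (\<lambda>s. \<Sum>v\<in>V. (\<gamma> s (x v) - p v) \<bullet> (\<gamma> s (x v) - p v))"
  have "\<phi> = (\<lambda>s. sq_deviation V p ((\<gamma> s \<circ> F) \<circ> q))"
    by (simp add: \<phi>_def x_def sq_deviation_def power2_norm_eq_inner fun_eq_iff)
  then have min: "\<phi> 0 \<le> \<phi> s" for s
    using closest[OF isometryC_comp[OF \<gamma>(1) F]] \<gamma>(2) by simp
  have "((\<lambda>s. \<gamma> s (x v) - p v) has_derivative (\<lambda>h. h *\<^sub>R g (x v))) (at 0)" for v
    using has_derivative_diff[OF \<gamma>_deriv[of "x v", unfolded has_vector_derivative_def]
        has_derivative_const[of "p v"]] by simp
  then have "(\<phi> has_derivative (\<lambda>h. \<Sum>v\<in>V. (\<gamma> 0 (x v) - p v) \<bullet> (h *\<^sub>R g (x v))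
      + (h *\<^sub>R g (x v)) \<bullet> (\<gamma> 0 (x v) - p v))) (at 0)"
    unfolding \<phi>_def by (intro has_derivative_sum has_derivative_inner)
  moreover have "(\<gamma> 0 (x v) - p v) \<bullet> (h *\<^sub>R g (x v)) + (h *\<^sub>R g (x v)) \<bullet> (\<gamma> 0 (x v) - p v)
      = h * (2 * (g (x v) \<bullet> (x v - p v)))" for v h
    by (simp add: \<gamma>(2) inner_commute[of "x v - p v"])
  ultimately have "(\<phi> has_derivative (\<lambda>h. (2 * (\<Sum>v\<in>V. g (x v) \<bullet> (x v - p v))) * h)) (at 0)"
    by (simp add: sum_distrib_left sum_distrib_right mult_ac)
  then have "(\<phi> has_real_derivative 2 * (\<Sum>v\<in>V. g (x v) \<bullet> (x v - p v))) (at 0)"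
    by (simp add: has_field_derivative_def)
  then have "2 * (\<Sum>v\<in>V. g (x v) \<bullet> (x v - p v)) = 0"
    using min by (intro DERIV_local_min[of _ _ 0 1]) auto
  then show ?thesis
    by (simp add: x_def)
qed

section \<open>Flexes as limits of contact-preserving motions\<close>

lemma phiC_unique:
  assumes "((\<lambda>y. (normC C y)\<^sup>2 / 2) has_derivative (\<lambda>h. g \<bullet> h)) (at a)"
  shows "phiC C a = g"
proof -
  have "((\<lambda>y. (normC C y)\<^sup>2 / 2) has_derivative (\<lambda>h. phiC C a \<bullet> h)) (at a)"
    unfolding phiC_def using assms by (rule someI)
  then have "(\<lambda>h. phiC C a \<bullet> h) = (\<lambda>h. g \<bullet> h)"
    using assms by (rule has_derivative_unique)
  then show ?thesis
    by (metis vector_eq_rdot)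
qed

lemma phiC_has_derivative:
  assumes "normC C differentiable (at a)"
  shows "((\<lambda>y. (normC C y)\<^sup>2 / 2) has_derivative (\<lambda>h. phiC C a \<bullet> h)) (at a)"
proof -
  obtain D where D: "(normC C has_derivative D) (at a)"
    using assms by (auto simp: differentiable_def)
  define k' where "k' = (\<lambda>h. normC C a * D h)"
  have k': "((\<lambda>y. (normC C y)\<^sup>2 / 2) has_derivative k') (at a)"
    unfolding k'_def power2_eq_square using D by (auto intro!: derivative_eq_intros simp: field_simps)
  have "k' = (\<lambda>h. adjoint k' 1 \<bullet> h)"
    using adjoint_works[OF has_derivative_linear[OF k']] by (simp add: fun_eq_iff inner_commute)
  with k' have "((\<lambda>y. (normC C y)\<^sup>2 / 2) has_derivative (\<lambda>h. adjoint k' 1 \<bullet> h)) (at a)"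
    by simp
  then show ?thesis
    unfolding phiC_def by (rule someI)
qed

lemma (in symmetric_convex_body) phiC_minus:
  assumes "normC C differentiable (at a)"
  shows "phiC C (- a) = - phiC C a"
proof -
  have "((\<lambda>y. (normC C y)\<^sup>2 / 2) has_derivative (\<lambda>h. phiC C a \<bullet> h)) (at (- (- a)))"
    using phiC_has_derivative[OF assms] by simp
  then have "((\<lambda>y. (normC C (- y))\<^sup>2 / 2) has_derivative (\<lambda>h. phiC C a \<bullet> (- h))) (at (- a))"
    by (rule has_derivative_compose[OF has_derivative_minus[OF has_derivative_ident]])
  then have "((\<lambda>y. (normC C y)\<^sup>2 / 2) has_derivative (\<lambda>h. (- phiC C a) \<bullet> h)) (at (- a))"
    by simp
  then show ?thesis
    by (rule phiC_unique)
qed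

lemma has_derivative_zero_along_level_sequence:
  fixes k :: "'a::real_normed_vector \<Rightarrow> real"
  assumes k: "(k has_derivative k') (at a)"
    and t: "t \<longlonglongrightarrow> 0" "\<And>n. t n > 0" and h: "h \<longlonglongrightarrow> h0"
    and level: "\<And>n. k (a + t n *\<^sub>R h n) = k a"
  shows "k' h0 = 0"
proof -
  define R where "R y = norm (k y - k a - k' (y - a)) / norm (y - a)" for y
  have lin: "bounded_linear k'"
    using k by (rule has_derivative_bounded_linear)
  have "(R \<longlongrightarrow> 0) (at a)"
    using k unfolding has_derivative_iff_norm R_def by simp
  moreover have "R a = 0"
    by (simp add: R_def)
  ultimately have "isCont R a"
    by (simp add: isCont_def)
  moreover have "(\<lambda>n. a + t n *\<^sub>R h n) \<longlonglongrightarrow> a"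
    using tendsto_add[OF tendsto_const tendsto_scaleR[OF t(1) h], of a] by simp
  ultimately have "(\<lambda>n. R (a + t n *\<^sub>R h n)) \<longlonglongrightarrow> R a"
    by (rule isCont_tendsto_compose)
  then have "(\<lambda>n. R (a + t n *\<^sub>R h n) * norm (h n)) \<longlonglongrightarrow> 0 * norm h0"
    using \<open>R a = 0\<close> by (intro tendsto_intros h) simp
  moreover have "R (a + t n *\<^sub>R h n) * norm (h n) = \<bar>k' (h n)\<bar>" for n
  proof (cases "h n = 0")
    case True
    then show ?thesis
      by (simp add: linear_0[OF bounded_linear.linear[OF lin]])
  next
    case False
    have "k (a + t n *\<^sub>R h n) - k a - k' (t n *\<^sub>R h n) = - (t n * k' (h n))"
      using level[of n] linear_scale[OF bounded_linear.linear[OF lin]] by simp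
    then show ?thesis
      using t(2)[of n] False by (simp add: R_def abs_mult)
  qed
  ultimately have "(\<lambda>n. \<bar>k' (h n)\<bar>) \<longlonglongrightarrow> 0"
    by simp
  moreover have "(\<lambda>n. \<bar>k' (h n)\<bar>) \<longlonglongrightarrow> \<bar>k' h0\<bar>"
    by (intro tendsto_intros bounded_linear.tendsto[OF lin h])
  ultimately show ?thesis
    using LIMSEQ_unique by fastforce
qed

lemma normalized_deviation_convergent_subsequence:
  fixes X :: "nat \<Rightarrow> 'v \<Rightarrow> 'a::euclidean_space"
  assumes V: "finite V" and X0: "(\<lambda>n. sq_deviation V p (X n)) \<longlonglongrightarrow> 0"
    and X_pos: "\<And>n. sq_deviation V p (X n) > 0"
  obtains r t D d where "strict_mono r" "t \<longlonglongrightarrow> 0" "\<And>n. t n > 0"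
    "\<And>n v. X (r n) v = p v + t n *\<^sub>R D n v" "\<And>v. v \<in> V \<Longrightarrow> (\<lambda>n. D n v) \<longlonglongrightarrow> d v"
    "(\<Sum>v\<in>V. (norm (d v))\<^sup>2) = 1"
proof -
  define s where "s n = sqrt (sq_deviation V p (X n))" for n
  define E where "E n v = (1 / s n) *\<^sub>R (X n v - p v)" for n v
  have s_pos: "s n > 0" for n
    using X_pos by (simp add: s_def)
  have X_eq: "X n v = p v + s n *\<^sub>R E n v" for n v
    using s_pos[of n] by (simp add: E_def)
  have E_unit: "sq_deviation V (\<lambda>_. 0) (E n) = 1" for n
  proof -
    have "sq_deviation V (\<lambda>_. 0) (E n) = sq_deviation V p (X n) / (s n)\<^sup>2"
      using s_pos[of n] by (simp add: E_def sq_deviation_def sum_divide_distrib power_divide)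
    then show ?thesis
      using X_pos[of n] by (simp add: s_def)
  qed
  have "norm (E n v) \<le> 1" if "v \<in> V" for n v
    using norm_le_sqrt_sq_deviation[OF V that, where q = "E n" and p = "\<lambda>_. 0"] E_unit by simp
  then have "bounded (range (\<lambda>n. E n v))" if "v \<in> V" for v
    using that by (auto simp: bounded_iff)
  then obtain r d where r: "strict_mono r" and d: "\<And>v. v \<in> V \<Longrightarrow> (\<lambda>n. E (r n) v) \<longlonglongrightarrow> d v"
    using convergent_subsequence_finite_family[OF V, of E] by blast
  have "(\<lambda>n. sq_deviation V (\<lambda>_. 0) (E (r n))) \<longlonglongrightarrow> sq_deviation V (\<lambda>_. 0) d"
    unfolding sq_deviation_def by (intro tendsto_intros d)
  then have "(\<lambda>n. 1) \<longlonglongrightarrow> sq_deviation V (\<lambda>_. 0) d"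
    by (simp add: E_unit)
  then have "sq_deviation V (\<lambda>_. 0) d = 1"
    using LIMSEQ_unique tendsto_const by metis
  moreover have "(\<lambda>n. s (r n)) \<longlonglongrightarrow> 0"
    using LIMSEQ_subseq_LIMSEQ[OF tendsto_real_sqrt[OF X0] r] by (simp add: s_def o_def)
  ultimately show thesis
    using r s_pos X_eq d by (intro that[of r "\<lambda>n. s (r n)" "\<lambda>n. E (r n)" d]) (simp_all add: sq_deviation_def)
qed

lemma limit_displacement_zero_if_orthogonal:
  fixes D :: "nat \<Rightarrow> 'v \<Rightarrow> 'a::euclidean_space"
  assumes A: "linear A" and d: "\<And>v. v \<in> V \<Longrightarrow> A (p v) + b = d v"
    and t: "t \<longlonglongrightarrow> 0" "\<And>n. t n > 0" and D: "\<And>v. v \<in> V \<Longrightarrow> (\<lambda>n. D n v) \<longlonglongrightarrow> d v"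
    and orth: "\<And>n. (\<Sum>v\<in>V. (A (p v + t n *\<^sub>R D n v) + b) \<bullet> (t n *\<^sub>R D n v)) = 0"
  shows "(\<Sum>v\<in>V. (norm (d v))\<^sup>2) = 0"
proof -
  define S where "S n = (\<Sum>v\<in>V. (d v + t n *\<^sub>R A (D n v)) \<bullet> D n v)" for n
  have "S n = 0" for n
  proof -
    have "A (p v + t n *\<^sub>R D n v) + b = d v + t n *\<^sub>R A (D n v)" if "v \<in> V" for v
      using d[OF that] by (simp add: linear_add[OF A] linear_scale[OF A] algebra_simps)
    then have "(\<Sum>v\<in>V. (A (p v + t n *\<^sub>R D n v) + b) \<bullet> (t n *\<^sub>R D n v)) = t n * S n"
      unfolding S_def sum_distrib_left by (intro sum.cong) auto
    then show ?thesis
      using orth[of n] t(2)[of n] by simp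
  qed
  then have "S = (\<lambda>n. 0)"
    by (simp add: fun_eq_iff)
  moreover have "(\<lambda>n. A (D n v)) \<longlonglongrightarrow> A (d v)" if "v \<in> V" for v
    using bounded_linear.tendsto[OF linear_conv_bounded_linear[THEN iffD1, OF A] D[OF that]] .
  then have "S \<longlonglongrightarrow> (\<Sum>v\<in>V. (d v + 0 *\<^sub>R A (d v)) \<bullet> d v)"
    unfolding S_def by (intro tendsto_intros D t(1))
  ultimately show ?thesis
    by (simp add: power2_norm_eq_inner LIMSEQ_const_iff)
qed

section \<open>Local congruence and sticky rigidity\<close>

definition preserves_contacts ::
    "'a::euclidean_space set \<Rightarrow> 'v set \<Rightarrow> ('v \<Rightarrow> 'a) \<Rightarrow> ('v \<Rightarrow> real) \<Rightarrow> ('v \<Rightarrow> 'a) \<Rightarrow> bool" where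
  "preserves_contacts C V p r q \<longleftrightarrow>
     (\<forall>v w. contact_edge C V p r v w \<longrightarrow> normC C (q v - q w) = normC C (p v - p w))"

definition congruentC :: "'a::euclidean_space set \<Rightarrow> 'v set \<Rightarrow> ('v \<Rightarrow> 'a) \<Rightarrow> ('v \<Rightarrow> 'a) \<Rightarrow> bool" where
  "congruentC C V p q \<longleftrightarrow> (\<exists>f. isometryC C f \<and> (\<forall>v\<in>V. q v = f (p v)))"

definition locally_congruent ::
    "'a::euclidean_space set \<Rightarrow> 'v set \<Rightarrow> ('v \<Rightarrow> 'a) \<Rightarrow> ('v \<Rightarrow> real) \<Rightarrow> real \<Rightarrow> bool" where
  "locally_congruent C V p r \<epsilon> \<longleftrightarrow>
     (\<forall>q. (\<forall>v\<in>V. normC C (q v - p v) < \<epsilon>) \<longrightarrow> preserves_contacts C V p r q \<longrightarrow> congruentC C V p q)"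

lemma preserves_contacts_isometryC_comp:
  "isometryC C F \<Longrightarrow> preserves_contacts C V p r q \<Longrightarrow> preserves_contacts C V p r (F \<circ> q)"
  by (simp add: preserves_contacts_def isometryC_normC)

lemma congruentC_if_isometryC_image:
  assumes "isometryC C F" and "\<forall>v\<in>V. F (q v) = p v"
  shows "congruentC C V p q"
proof -
  have "q v = inv F (p v)" if "v \<in> V" for v
    using assms that isometryC_inv_f by metis
  then show ?thesis
    using isometryC_inv[OF assms(1)] by (auto simp: congruentC_def)
qed

lemma congruentC_near_congruent:
  assumes local: "locally_congruent C V p r \<epsilon>"
    and q0: "congruentC C V p q0"
    and close: "\<forall>v\<in>V. normC C (q v - q0 v) < \<epsilon>"
    and preserves: "preserves_contacts C V p r q"
  shows "congruentC C V p q"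
proof -
  obtain f where f: "isometryC C f" and q0_eq: "\<forall>v\<in>V. q0 v = f (p v)"
    using q0 by (auto simp: congruentC_def)
  have "normC C ((inv f \<circ> q) v - p v) < \<epsilon>" if "v \<in> V" for v
  proof -
    have "normC C ((inv f \<circ> q) v - p v) = normC C (inv f (q v) - inv f (q0 v))"
      using q0_eq that f by simp
    also have "\<dots> = normC C (q v - q0 v)"
      by (rule isometryC_normC[OF isometryC_inv[OF f]])
    finally show ?thesis
      using close that by simp
  qed
  moreover have "preserves_contacts C V p r (inv f \<circ> q)"
    using isometryC_inv[OF f] preserves by (rule preserves_contacts_isometryC_comp)
  ultimately have "congruentC C V p (inv f \<circ> q)"
    using local by (simp add: locally_congruent_def)
  then obtain h where h: "isometryC C h" "\<forall>v\<in>V. inv f (q v) = h (p v)"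
    by (auto simp: congruentC_def)
  then have "\<forall>v\<in>V. q v = (f \<circ> h) (p v)"
    using f by (metis comp_apply isometryC_f_inv)
  with isometryC_comp[OF f h(1)] show ?thesis
    by (auto simp: congruentC_def)
qed

context symmetric_convex_body
begin

lemma is_flex_of_contact_preserving_sequence:
  assumes wp: "well_positioned C V p r"
    and t: "t \<longlonglongrightarrow> 0" "\<And>n. t n > 0" and D: "\<And>v. v \<in> V \<Longrightarrow> (\<lambda>n. D n v) \<longlonglongrightarrow> d v"
    and preserves: "\<And>n. preserves_contacts C V p r (\<lambda>v. p v + t n *\<^sub>R D n v)"
  shows "is_flex C V p r d"
  unfolding is_flex_def
proof (intro allI impI)
  fix v w
  assume vw: "contact_edge C V p r v w"
  then have "v \<in> V" "w \<in> V"
    by (auto simp: contact_edge_def)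
  have diff: "normC C differentiable (at (p v - p w))"
    using wp vw by (simp add: well_positioned_def)
  have "phiC C (p v - p w) \<bullet> (d v - d w) = 0"
  proof (rule has_derivative_zero_along_level_sequence[OF phiC_has_derivative[OF diff] t])
    show "(\<lambda>n. D n v - D n w) \<longlonglongrightarrow> d v - d w"
      using D \<open>v \<in> V\<close> \<open>w \<in> V\<close> by (intro tendsto_intros)
    fix n
    have "normC C ((p v - p w) + t n *\<^sub>R (D n v - D n w)) = normC C (p v - p w)"
      using preserves[of n] vw unfolding preserves_contacts_def by (simp add: algebra_simps)
    then show "(normC C ((p v - p w) + t n *\<^sub>R (D n v - D n w)))\<^sup>2 / 2 = (normC C (p v - p w))\<^sup>2 / 2"
      by simp
  qed
  moreover have "phiC C (p w - p v) = - phiC C (p v - p w)"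
    using phiC_minus[OF diff] by simp
  ultimately show "phiC C (p v - p w) \<bullet> d v + phiC C (p w - p v) \<bullet> d w = 0"
    by (simp add: inner_diff_right)
qed

lemma closest_isometric_images_converge:
  assumes V: "finite V" and Q: "\<And>v. v \<in> V \<Longrightarrow> (\<lambda>n. Q n v) \<longlonglongrightarrow> p v"
    and noncongruent: "\<And>n. \<not> congruentC C V p (Q n)"
  obtains F where "\<And>n. isometryC C (F n)"
    "\<And>n G. isometryC C G \<Longrightarrow> sq_deviation V p (F n \<circ> Q n) \<le> sq_deviation V p (G \<circ> Q n)"
    "(\<lambda>n. sq_deviation V p (F n \<circ> Q n)) \<longlonglongrightarrow> 0" "\<And>n. sq_deviation V p (F n \<circ> Q n) > 0"
proof -
  have "\<forall>n. \<exists>F. isometryC C F \<and>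
      (\<forall>G. isometryC C G \<longrightarrow> sq_deviation V p (F \<circ> Q n) \<le> sq_deviation V p (G \<circ> Q n))"
    using closest_isometric_image_exists[OF V] by metis
  then obtain F where F: "\<And>n. isometryC C (F n)"
    and closest: "\<And>n G. isometryC C G \<Longrightarrow> sq_deviation V p (F n \<circ> Q n) \<le> sq_deviation V p (G \<circ> Q n)"
    by metis
  have "(\<lambda>n. sq_deviation V p (Q n)) \<longlonglongrightarrow> sq_deviation V p p"
    unfolding sq_deviation_def by (intro tendsto_intros Q)
  then have Q0: "(\<lambda>n. sq_deviation V p (Q n)) \<longlonglongrightarrow> 0"
    by (simp add: sq_deviation_def)
  have "sq_deviation V p (F n \<circ> Q n) \<le> sq_deviation V p (Q n)" for n
    using closest[OF isometryC_id, of n] by simp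
  then have le: "eventually (\<lambda>n. sq_deviation V p (F n \<circ> Q n) \<le> sq_deviation V p (Q n)) sequentially"
    by (intro always_eventually allI)
  have nonneg: "eventually (\<lambda>n. 0 \<le> sq_deviation V p (F n \<circ> Q n)) sequentially"
    by (simp add: sq_deviation_nonneg)
  have X0: "(\<lambda>n. sq_deviation V p (F n \<circ> Q n)) \<longlonglongrightarrow> 0"
    by (rule tendsto_sandwich[OF nonneg le tendsto_const Q0])
  have X_pos: "sq_deviation V p (F n \<circ> Q n) > 0" for n
  proof (rule ccontr)
    assume "\<not> ?thesis"
    then have "\<forall>v\<in>V. F n (Q n v) = p v"
      using sq_deviation_nonneg[of V p "F n \<circ> Q n"] by (simp add: sq_deviation_eq_0_iff[OF V])
    with congruentC_if_isometryC_image[OF F] noncongruent show False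
      by blast
  qed
  show thesis
    by (rule that[OF F closest X0 X_pos])
qed

lemma no_flexing_sequence:
  assumes V: "finite V" and rigid: "sticky_inf_rigid C V p r"
    and Q: "\<And>v. v \<in> V \<Longrightarrow> (\<lambda>n. Q n v) \<longlonglongrightarrow> p v"
    and preserves: "\<And>n. preserves_contacts C V p r (Q n)"
    and noncongruent: "\<And>n. \<not> congruentC C V p (Q n)"
  shows False
proof -
  obtain F where F: "\<And>n. isometryC C (F n)"
    and closest: "\<And>n G. isometryC C G \<Longrightarrow> sq_deviation V p (F n \<circ> Q n) \<le> sq_deviation V p (G \<circ> Q n)"
    and X0: "(\<lambda>n. sq_deviation V p (F n \<circ> Q n)) \<longlonglongrightarrow> 0"
    and X_pos: "\<And>n. sq_deviation V p (F n \<circ> Q n) > 0"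
    using closest_isometric_images_converge[OF V Q noncongruent] by blast
  obtain s t D d where "strict_mono s" and t: "t \<longlonglongrightarrow> 0" "\<And>n. t n > 0"
    and X_eq: "\<And>n v. (F (s n) \<circ> Q (s n)) v = p v + t n *\<^sub>R D n v"
    and D: "\<And>v. v \<in> V \<Longrightarrow> (\<lambda>n. D n v) \<longlonglongrightarrow> d v"
    and d_unit: "(\<Sum>v\<in>V. (norm (d v))\<^sup>2) = 1"
    using normalized_deviation_convergent_subsequence[OF V X0 X_pos] by blast
  have "(\<lambda>v. p v + t n *\<^sub>R D n v) = F (s n) \<circ> Q (s n)" for n
    using X_eq by (simp add: fun_eq_iff)
  then have "preserves_contacts C V p r (\<lambda>v. p v + t n *\<^sub>R D n v)" for n
    using preserves_contacts_isometryC_comp[OF F preserves] by simp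
  moreover have "well_positioned C V p r"
    using rigid by (simp add: sticky_inf_rigid_def)
  ultimately have "is_flex C V p r d"
    by (intro is_flex_of_contact_preserving_sequence[OF _ t D])
  then have "trivial_flex C V p d"
    using rigid by (simp add: sticky_inf_rigid_def)
  then obtain g A b where A: "linear A" and g_eq: "g = (\<lambda>x. A x + b)"
    and g: "infinitesimal_isometry C g" and g_p: "\<forall>v\<in>V. g (p v) = d v"
    unfolding trivial_flex_def by blast
  have "(\<Sum>v\<in>V. (A (p v + t n *\<^sub>R D n v) + b) \<bullet> (t n *\<^sub>R D n v)) = 0" for n
    using closest_isometric_image_orthogonal[OF F[of "s n"] closest[where n = "s n"] g] X_eq
    by (simp add: g_eq)
  moreover have "\<And>v. v \<in> V \<Longrightarrow> A (p v) + b = d v"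
    using g_p by (simp add: g_eq)
  ultimately have "(\<Sum>v\<in>V. (norm (d v))\<^sup>2) = 0"
    by (intro limit_displacement_zero_if_orthogonal[OF A _ t D])
  with d_unit show False
    by simp
qed

lemma sticky_inf_rigid_locally_congruent:
  assumes V: "finite V" and rigid: "sticky_inf_rigid C V p r"
  obtains \<epsilon> where "\<epsilon> > 0" "locally_congruent C V p r \<epsilon>"
proof (rule ccontr)
  assume not_local: "\<not> thesis"
  have "inverse (real (Suc n)) > 0" for n
    by simp
  then have "\<not> locally_congruent C V p r (inverse (Suc n))" for n
    using that not_local by blast
  then have "\<forall>n. \<exists>q. (\<forall>v\<in>V. normC C (q v - p v) < inverse (Suc n)) \<and>
      preserves_contacts C V p r q \<and> \<not> congruentC C V p q"
    unfolding locally_congruent_def by blast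
  then obtain Q where Q: "\<And>n. (\<forall>v\<in>V. normC C (Q n v - p v) < inverse (Suc n)) \<and>
      preserves_contacts C V p r (Q n) \<and> \<not> congruentC C V p (Q n)"
    by metis
  obtain a where a: "a > 0" "\<And>x. norm x \<le> a * normC C x"
    using norm_le_normC by blast
  have "(\<lambda>n. Q n v) \<longlonglongrightarrow> p v" if "v \<in> V" for v
  proof -
    have "norm (Q n v - p v) \<le> a * inverse (Suc n)" for n
    proof -
      have "a * normC C (Q n v - p v) \<le> a * inverse (Suc n)"
        using Q[of n] that a(1) by (intro mult_left_mono) auto
      then show ?thesis
        using a(2)[of "Q n v - p v"] by linarith
    qed
    then have "eventually (\<lambda>n. norm (Q n v - p v) \<le> a * inverse (Suc n)) sequentially"
      by (intro always_eventually allI)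
    moreover have "(\<lambda>n. a * inverse (Suc n)) \<longlonglongrightarrow> 0"
      using tendsto_mult_right_zero[OF LIMSEQ_inverse_real_of_nat] by simp
    ultimately have "(\<lambda>n. Q n v - p v) \<longlonglongrightarrow> 0"
      by (rule Lim_null_comparison)
    then show ?thesis
      using Lim_null[of "\<lambda>n. Q n v" "p v" sequentially] by simp
  qed
  moreover have "preserves_contacts C V p r (Q n)" "\<not> congruentC C V p (Q n)" for n
    using Q[of n] by simp_all
  ultimately show False
    by (rule no_flexing_sequence[OF V rigid])
qed

lemma continuous_family_locally_close:
  assumes V: "finite V" and cont: "\<And>v. v \<in> V \<Longrightarrow> continuous_on S (\<lambda>s. \<alpha> s v)"
    and a: "a \<in> S" and e: "e > 0"
  obtains \<eta> where "\<eta> > 0" "\<And>s s' v. s \<in> S \<Longrightarrow> s' \<in> S \<Longrightarrow> dist s a < \<eta> \<Longrightarrow> dist s' a < \<eta> \<Longrightarrow> v \<in> V \<Longrightarrow>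
    normC C (\<alpha> s v - \<alpha> s' v) < e"
proof -
  have "\<forall>v\<in>V. eventually (\<lambda>s. normC C (\<alpha> s v - \<alpha> a v) < e / 2) (at a within S)"
  proof
    fix v
    assume "v \<in> V"
    then have "((\<lambda>s. \<alpha> s v) \<longlongrightarrow> \<alpha> a v) (at a within S)"
      using cont a by (simp add: continuous_on_def)
    then have "((\<lambda>s. normC C (\<alpha> s v - \<alpha> a v)) \<longlongrightarrow> normC C (\<alpha> a v - \<alpha> a v)) (at a within S)"
      by (intro tendsto_intros)
    then show "eventually (\<lambda>s. normC C (\<alpha> s v - \<alpha> a v) < e / 2) (at a within S)"
      by (rule order_tendstoD(2)) (simp add: e)
  qed
  then have "eventually (\<lambda>s. \<forall>v\<in>V. normC C (\<alpha> s v - \<alpha> a v) < e / 2) (at a within S)"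
    by (rule eventually_ball_finite[OF V])
  then obtain \<eta> where "\<eta> > 0"
    and \<eta>: "\<forall>s\<in>S. s \<noteq> a \<and> dist s a < \<eta> \<longrightarrow> (\<forall>v\<in>V. normC C (\<alpha> s v - \<alpha> a v) < e / 2)"
    unfolding eventually_at by blast
  have near: "normC C (\<alpha> s v - \<alpha> a v) < e / 2" if "s \<in> S" "dist s a < \<eta>" "v \<in> V" for s v
    using \<eta> that e by (cases "s = a") auto
  have "normC C (\<alpha> s v - \<alpha> s' v) < e"
    if "s \<in> S" "s' \<in> S" "dist s a < \<eta>" "dist s' a < \<eta>" "v \<in> V" for s s' v
  proof -
    have "normC C (\<alpha> s v - \<alpha> s' v) \<le> normC C (\<alpha> s v - \<alpha> a v) + normC C (\<alpha> s' v - \<alpha> a v)"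
      using normC_triangle_diff[of "\<alpha> s v" "\<alpha> s' v" "\<alpha> a v"] normC_minus_commute[of "\<alpha> a v" "\<alpha> s' v"]
      by simp
    then show ?thesis
      using near[of s v] near[of s' v] that by simp
  qed
  with \<open>\<eta> > 0\<close> show thesis
    by (rule that)
qed

lemma locally_congruent_sticky_rigid:
  fixes V :: "'v set"
  assumes V: "finite V" and "\<epsilon> > 0" and local: "locally_congruent C V p r \<epsilon>"
  shows "sticky_rigid C V p r"
  unfolding sticky_rigid_def
proof (intro allI impI ballI)
  fix \<delta> :: real and \<alpha> :: "real \<Rightarrow> 'v \<Rightarrow> 'a" and t
  assume "\<delta> > 0" and t: "t \<in> {0..\<delta>}"
    and path: "(\<forall>v\<in>V. continuous_on {0..\<delta>} (\<lambda>t. \<alpha> t v)) \<and> (\<forall>v\<in>V. \<alpha> 0 v = p v) \<and>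
      (\<forall>v w t. contact_edge C V p r v w \<and> t \<in> {0..\<delta>} \<longrightarrow> normC C (\<alpha> t v - \<alpha> t w) = normC C (p v - p w))"
  have "congruentC C V p (\<alpha> t)"
  proof (rule connected_induction_simple[of "{0..\<delta>}" 0 t])
    show "congruentC C V p (\<alpha> 0)"
      using path isometryC_id unfolding congruentC_def by (intro exI[of _ id]) auto
    fix a
    assume a: "a \<in> {0..\<delta>}"
    have "\<And>v. v \<in> V \<Longrightarrow> continuous_on {0..\<delta>} (\<lambda>s. \<alpha> s v)"
      using path by simp
    then obtain \<eta> where "\<eta> > 0" and near: "\<And>s s' v. s \<in> {0..\<delta>} \<Longrightarrow> s' \<in> {0..\<delta>} \<Longrightarrow>
        dist s a < \<eta> \<Longrightarrow> dist s' a < \<eta> \<Longrightarrow> v \<in> V \<Longrightarrow> normC C (\<alpha> s v - \<alpha> s' v) < \<epsilon>"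
      using continuous_family_locally_close[OF V _ a \<open>\<epsilon> > 0\<close>] by blast
    show "\<exists>T. openin (top_of_set {0..\<delta>}) T \<and> a \<in> T \<and>
        (\<forall>x\<in>T. \<forall>y\<in>T. congruentC C V p (\<alpha> x) \<longrightarrow> congruentC C V p (\<alpha> y))"
    proof (intro exI conjI ballI impI)
      show "openin (top_of_set {0..\<delta>}) ({0..\<delta>} \<inter> ball a \<eta>)"
        by (simp add: openin_open_Int)
      show "a \<in> {0..\<delta>} \<inter> ball a \<eta>"
        using a \<open>\<eta> > 0\<close> by simp
      fix x y
      assume x: "x \<in> {0..\<delta>} \<inter> ball a \<eta>" and y: "y \<in> {0..\<delta>} \<inter> ball a \<eta>"
        and "congruentC C V p (\<alpha> x)"
      have "\<forall>v\<in>V. normC C (\<alpha> y v - \<alpha> x v) < \<epsilon>"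
        using near x y by (simp add: dist_commute)
      moreover have "preserves_contacts C V p r (\<alpha> y)"
        using path y by (simp add: preserves_contacts_def)
      ultimately show "congruentC C V p (\<alpha> y)"
        using congruentC_near_congruent[OF local \<open>congruentC C V p (\<alpha> x)\<close>] by simp
    qed
  qed (use \<open>\<delta> > 0\<close> t in auto)
  then show "\<exists>f. isometryC C f \<and> (\<forall>v\<in>V. \<alpha> t v = f (p v))"
    by (simp add: congruentC_def)
qed

end

theorem proposition3p1:
  fixes C :: "'a::euclidean_space set" and V :: "'v set"
    and p :: "'v \<Rightarrow> 'a" and r :: "'v \<Rightarrow> real"
  assumes "cs_convex_body C" and "smooth_body C"
    and "C_packing C V p r" and "sticky_inf_rigid C V p r"
  shows "sticky_rigid C V p r"
proof -
  interpret symmetric_convex_body C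
    by unfold_locales (rule assms(1))
  have V: "finite V"
    using assms(3) by (simp add: C_packing_def)
  obtain \<epsilon> where "\<epsilon> > 0" "locally_congruent C V p r \<epsilon>"
    using sticky_inf_rigid_locally_congruent[OF V assms(4)] by blast
  then show ?thesis
    by (intro locally_congruent_sticky_rigid[OF V])
qed

end
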